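(* Let $q$ and $n$ be positive integers with $q>\lceil n/2\rceil$, and let $a_1,\dots,a_n\in\mathbb{Z}_q$ be reduced residues (i.e. $\gcd(a_i,q)=1$ for all $i$). Then the number of the $2^n$ choices $(\varepsilon_1,\dots,\varepsilon_n)\in\{0,1\}^n$ for which $\sum_{i=1}^n\varepsilon_i a_i\equiv 0\pmod q$ is at most $\binom{n}{\lfloor n/2\rfloor}$. Moreover, this bound is best possible: for all such $q,n$ there exist reduced residues $a_1,\dots,a_n$ attaining it.
   Context: $\mathbb{Z}_q$ denotes the integers modulo $q$. *)

theory Defs
  imports Complex_Main "HOL-Library.FuncSet" "HOL-Number_Theory.Cong"
begin

definition zero_sum_count :: "nat \<Rightarrow> nat \<Rightarrow> (nat \<Rightarrow> int) \<Rightarrow> nat" where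
  "zero_sum_count q n a =
     card {eps \<in> {0..<n} \<rightarrow>\<^sub>E {0::int, 1}. [(\<Sum>i<n. eps i * a i) = 0] (mod int q)}"

end

(*
  Let N_L(t) be the number of subsets of {0..<L} whose a-sum is congruent to t mod q, and
  N_L(A) = (SUM t:A. N_L(t)) for a set A of residues.  The upper bound is the case A = {0} of
  N_L(A) <= (sum of the |A| central binomial coefficients of row L), valid when |A| + L < 2q,
  which is proved by induction on L.  With B = A - a_L one has
  N_(L+1)(A) = N_L(A) + N_L(B) = N_L(A \<inter> B) + N_L(A \<union> B).  Since a_L is a unit and
  0 < |A| < q, the set A is not invariant under translation by a_L, so |A \<inter> B| < |A|;
  repeatedly adding to A \<inter> B the better and deleting from A \<union> B the worse of two elements of
  their difference turns this pair into sets of sizes |A| - 1 and |A| + 1 without decreasing the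
  total, and Pascal's rule closes the induction.

  Equality holds for ceiling(n/2) coefficients equal to 1 and the others equal to -1: as both
  counts are below q, a subset sums to 0 mod q iff it contains equally many of each kind, and
  complementing its (-1)-part maps these subsets bijectively onto the subsets of size floor(n/2).
*)
theory Submission
  imports Defs
begin

(* The sum of the m central entries L choose j, (L - m)/2 < j <= (L + m)/2, of row L of Pascal's
   triangle, i.e. of its m largest entries; for m > L this is the whole row. *)
definition middle_binomial_sum :: "nat \<Rightarrow> nat \<Rightarrow> nat" where
  "middle_binomial_sum L m = (\<Sum>j | L < 2 * j + m \<and> 2 * j \<le> L + m. L choose j)"

lemma finite_binomial_window: "finite {j::nat. L < 2 * j + m \<and> 2 * j \<le> L + m}"
  by (rule finite_subset[of _ "{..L + m}"]) auto

lemma middle_binomial_sum_eq_pow: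
  assumes "L < m"
  shows "middle_binomial_sum L m = 2 ^ L"
proof -
  have "middle_binomial_sum L m = (\<Sum>j\<le>L. L choose j)"
    unfolding middle_binomial_sum_def
  proof (rule sum.mono_neutral_right[OF finite_binomial_window])
    show "{..L} \<subseteq> {j. L < 2 * j + m \<and> 2 * j \<le> L + m}"
      using assms by auto
    show "\<forall>j\<in>{j. L < 2 * j + m \<and> 2 * j \<le> L + m} - {..L}. L choose j = 0"
      by simp
  qed
  then show ?thesis
    by (simp add: choose_row_sum)
qed

lemma middle_binomial_sum_one: "middle_binomial_sum n 1 = n choose (n div 2)"
proof -
  have "{j. n < 2 * j + 1 \<and> 2 * j \<le> n + 1} = {(n + 1) div 2}"
    by auto
  then have "middle_binomial_sum n 1 = n choose ((n + 1) div 2)"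
    by (simp add: middle_binomial_sum_def)
  also have "\<dots> = n choose (n - (n + 1) div 2)"
    by (rule binomial_symmetric) simp
  also have "n - (n + 1) div 2 = n div 2"
    by simp
  finally show ?thesis .
qed

lemma middle_binomial_sum_Suc:
  assumes "0 < m"
  shows "middle_binomial_sum (Suc L) m = middle_binomial_sum L (m - 1) + middle_binomial_sum L (m + 1)"
proof -
  define W where "W = {j. Suc L < 2 * j + m \<and> 2 * j \<le> Suc L + m}"
  define V where "V = {j. Suc j \<in> W}"
  have fin: "finite W" "finite V"
    unfolding W_def V_def by (auto intro: finite_subset[of _ "{..Suc L + m}"])
  have "middle_binomial_sum (Suc L) m = (\<Sum>j\<in>W. L choose j) + (\<Sum>j\<in>W. if j = 0 then 0 else L choose (j - 1))"
  proof -
    have "Suc L choose j = (L choose j) + (if j = 0 then 0 else L choose (j - 1))" for j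
      by (cases j) auto
    then show ?thesis
      unfolding middle_binomial_sum_def W_def[symmetric] sum.distrib[symmetric] by simp
  qed
  also have "(\<Sum>j\<in>W. if j = 0 then 0 else L choose (j - 1)) = (\<Sum>j\<in>Suc ` V. L choose (j - 1))"
    by (rule sum.mono_neutral_cong_right) (use fin in \<open>auto simp: V_def image_iff gr0_conv_Suc\<close>)
  also have "\<dots> = (\<Sum>j\<in>V. L choose j)"
    by (simp add: sum.reindex)
  also have "(\<Sum>j\<in>W. L choose j) + (\<Sum>j\<in>V. L choose j) = (\<Sum>j\<in>W \<inter> V. L choose j) + (\<Sum>j\<in>W \<union> V. L choose j)"
    using sum.union_inter[OF fin, of "(choose) L"] by simp
  also have "W \<inter> V = {j. L < 2 * j + (m - 1) \<and> 2 * j \<le> L + (m - 1)}"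
    using assms unfolding W_def V_def by auto
  also have "W \<union> V = {j. L < 2 * j + (m + 1) \<and> 2 * j \<le> L + (m + 1)}"
    using assms unfolding W_def V_def by auto
  finally show ?thesis
    by (simp add: middle_binomial_sum_def)
qed

lemma sum_nested_pair_rebalance:
  fixes f :: "'a \<Rightarrow> 'b::{ordered_comm_monoid_add, linorder}"
  assumes "finite B" "A \<subseteq> B" "card A \<le> k" "2 * k \<le> card A + card B"
  shows "\<exists>C D. C \<subseteq> B \<and> D \<subseteq> B \<and> card C = k \<and> card C + card D = card A + card B \<and>
           sum f A + sum f B \<le> sum f C + sum f D"
  using assms
proof (induction "k - card A" arbitrary: A B)
  case 0
  then show ?case
    by (metis diff_is_0_eq le_antisym order_refl)
next
  case (Suc d)
  have "finite A"
    using Suc.prems(1,2) finite_subset by blast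
  then have "card (B - A) = card B - card A"
    using Suc.prems(2) by (simp add: card_Diff_subset)
  then have "2 \<le> card (B - A)"
    using Suc.hyps(2) Suc.prems(4) by linarith
  then obtain u D where uD: "B - A = insert u D" "u \<notin> D" "Suc 0 \<le> card D"
    by (auto simp: numeral_2_eq_2 card_le_Suc_iff)
  then obtain v where "v \<in> D"
    by (cases "D = {}") auto
  then have uv: "u \<in> B - A" "v \<in> B - A" "u \<noteq> v"
    using uD by auto
  obtain x y where xy: "x \<in> B - A" "y \<in> B - A" "x \<noteq> y" "f y \<le> f x"
  proof (cases "f v \<le> f u")
    case True
    then show ?thesis
      using that[of u v] uv by simp
  next
    case False
    then show ?thesis
      using that[of v u] uv by simp
  qed
  let ?A = "insert x A" and ?B = "B - {y}"
  have card: "card ?A = Suc (card A)" "Suc (card ?B) = card B"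
    using xy \<open>finite A\<close> by (simp, intro card_Suc_Diff1 Suc.prems(1)) simp
  have "d = k - card ?A" "finite ?B" "?A \<subseteq> ?B" "card ?A \<le> k" "2 * k \<le> card ?A + card ?B"
    using Suc.hyps(2) Suc.prems xy card by auto
  then obtain C D where CD: "C \<subseteq> ?B" "D \<subseteq> ?B" "card C = k" "card C + card D = card ?A + card ?B"
      "sum f ?A + sum f ?B \<le> sum f C + sum f D"
    using Suc.hyps(1) by blast
  have "sum f A + sum f B = sum f A + (f y + sum f ?B)"
    using xy(2) Suc.prems(1) by (simp add: sum.remove[of B y])
  also have "\<dots> \<le> sum f A + (f x + sum f ?B)"
    using xy(4) by (intro add_left_mono add_right_mono)
  also have "\<dots> = sum f ?A + sum f ?B"
    using xy \<open>finite A\<close> by (simp add: add_ac)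
  finally show ?case
    using CD card by (intro exI[of _ C] exI[of _ D]) auto
qed

lemma inj_on_shift_mod: "inj_on (\<lambda>t. (t - u) mod q) {0..<q::int}"
proof (rule inj_onI)
  fix x y
  assume "x \<in> {0..<q}" "y \<in> {0..<q}" and "(x - u) mod q = (y - u) mod q"
  then have "[x - u + u = y - u + u] (mod q)"
    by (intro cong_add cong_refl) (simp add: cong_def)
  then show "x = y"
    using \<open>x \<in> {0..<q}\<close> \<open>y \<in> {0..<q}\<close> by (simp add: cong_def)
qed

lemma shift_invariant_residues:
  fixes q u :: int
  assumes "coprime u q" "A \<subseteq> {0..<q}" "A \<noteq> {}" and invariant: "(\<lambda>t. (t - u) mod q) ` A = A"
  shows "A = {0..<q}"
proof
  show "A \<subseteq> {0..<q}"
    by (fact assms(2))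
  obtain t where "t \<in> A"
    using assms(3) by blast
  then have "q > 0"
    using assms(2) by auto
  have orbit: "(t - int k * u) mod q \<in> A" for k
  proof (induction k)
    case 0
    then show ?case
      using \<open>t \<in> A\<close> assms(2) by auto
  next
    case (Suc k)
    then have "((t - int k * u) mod q - u) mod q \<in> A"
      using invariant by blast
    then show ?case
      by (simp add: mod_diff_left_eq algebra_simps)
  qed
  show "{0..<q} \<subseteq> A"
  proof
    fix s assume s: "s \<in> {0..<q}"
    obtain v where v: "[u * v = 1] (mod q)"
      using cong_solve_coprime_int[OF assms(1)] by blast
    define k where "k = nat ((t - s) * v mod q)"
    have "[int k = (t - s) * v] (mod q)"
      using \<open>q > 0\<close> by (simp add: k_def cong_def)
    then have "[int k * u = (t - s) * (u * v)] (mod q)"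
      using cong_scalar_right[of "int k" "(t - s) * v" q u] by (simp add: ac_simps)
    also have "[(t - s) * (u * v) = t - s] (mod q)"
      using cong_scalar_left[OF v] by simp
    finally have "[t - int k * u = t - (t - s)] (mod q)"
      by (rule cong_diff[OF cong_refl])
    then show "s \<in> A"
      using orbit[of k] s by (simp add: cong_def)
  qed
qed

lemma card_inter_shift_residues_less:
  fixes q u :: int
  assumes "coprime u q" "A \<subseteq> {0..<q}" "A \<noteq> {}" "int (card A) < q"
  shows "card (A \<inter> (\<lambda>t. (t - u) mod q) ` A) < card A"
proof -
  let ?B = "(\<lambda>t. (t - u) mod q) ` A"
  have "finite A"
    using assms(2) finite_subset by blast
  have "card ?B = card A"
    by (rule card_image[OF inj_on_subset[OF inj_on_shift_mod assms(2)]])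
  have "A \<noteq> {0..<q}"
    using assms(4) by (auto split: if_splits)
  then have "?B \<noteq> A"
    using shift_invariant_residues[OF assms(1,2,3)] by blast
  then have "\<not> A \<subseteq> ?B"
    using card_subset_eq[of ?B A] \<open>finite A\<close> \<open>card ?B = card A\<close> by auto
  then have "A \<inter> ?B \<subset> A"
    by blast
  then show ?thesis
    by (rule psubset_card_mono[OF \<open>finite A\<close>])
qed

lemma card_Pow_insert_filter:
  assumes "finite X" "x \<notin> X"
  shows "card {S \<in> Pow (insert x X). P S} = card {S \<in> Pow X. P S} + card {S \<in> Pow X. P (insert x S)}"
proof -
  let ?U = "{S \<in> Pow X. P S}" and ?V = "{S \<in> Pow X. P (insert x S)}"
  have "{S \<in> Pow (insert x X). P S} = ?U \<union> insert x ` ?V"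
    by (auto simp: Pow_insert)
  moreover have "?U \<inter> insert x ` ?V = {}" "inj_on (insert x) ?V"
    using assms(2) by (auto intro!: inj_onI)
  moreover have "finite ?U" "finite ?V"
    using assms(1) by simp_all
  ultimately show ?thesis
    by (simp add: card_Un_disjoint card_image)
qed

definition residue_count :: "int \<Rightarrow> (nat \<Rightarrow> int) \<Rightarrow> nat \<Rightarrow> int \<Rightarrow> nat" where
  "residue_count q a L t = card {S \<in> Pow {..<L}. [(\<Sum>i\<in>S. a i) = t] (mod q)}"

lemma residue_count_mod [simp]: "residue_count q a L (t mod q) = residue_count q a L t"
  by (simp add: residue_count_def cong_def)

lemma residue_count_Suc:
  "residue_count q a (Suc L) t = residue_count q a L t + residue_count q a L (t - a L)"
proof -
  have "[(\<Sum>i\<in>insert L S. a i) = t] (mod q) \<longleftrightarrow> [(\<Sum>i\<in>S. a i) = t - a L] (mod q)"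
    if "S \<in> Pow {..<L}" for S
  proof -
    have "L \<notin> S" "finite S"
      using that finite_subset[of S "{..<L}"] by auto
    then have "(\<Sum>i\<in>insert L S. a i) = a L + (\<Sum>i\<in>S. a i)" "t = a L + (t - a L)"
      by simp_all
    then show ?thesis
      by (metis cong_add_lcancel)
  qed
  then have "{S \<in> Pow {..<L}. [(\<Sum>i\<in>insert L S. a i) = t] (mod q)} =
      {S \<in> Pow {..<L}. [(\<Sum>i\<in>S. a i) = t - a L] (mod q)}"
    by blast
  moreover have "card {S \<in> Pow (insert L {..<L}). [(\<Sum>i\<in>S. a i) = t] (mod q)} =
      card {S \<in> Pow {..<L}. [(\<Sum>i\<in>S. a i) = t] (mod q)} +
      card {S \<in> Pow {..<L}. [(\<Sum>i\<in>insert L S. a i) = t] (mod q)}"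
    by (rule card_Pow_insert_filter) simp_all
  ultimately show ?thesis
    unfolding residue_count_def lessThan_Suc by simp
qed

lemma sum_residue_count_Suc:
  assumes "A \<subseteq> {0..<q}"
  shows "(\<Sum>t\<in>A. residue_count q a (Suc L) t) =
    (\<Sum>t\<in>A. residue_count q a L t) + (\<Sum>t\<in>(\<lambda>t. (t - a L) mod q) ` A. residue_count q a L t)"
  using inj_on_subset[OF inj_on_shift_mod assms]
  by (simp add: residue_count_Suc sum.distrib sum.reindex)

lemma sum_residue_count_le:
  assumes "A \<subseteq> {0..<q}"
  shows "(\<Sum>t\<in>A. residue_count q a L t) \<le> 2 ^ L"
proof -
  let ?X = "\<lambda>t. {S \<in> Pow {..<L}. [(\<Sum>i\<in>S. a i) = t] (mod q)}"
  have "finite A"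
    using assms finite_subset by blast
  have "?X t \<inter> ?X t' = {}" if "t \<in> A" "t' \<in> A" "t \<noteq> t'" for t t'
  proof -
    have "t mod q = t" "t' mod q = t'"
      using that assms by auto
    then show ?thesis
      using that(3) by (auto simp: cong_def)
  qed
  then have "(\<Sum>t\<in>A. residue_count q a L t) = card (\<Union>t\<in>A. ?X t)"
    unfolding residue_count_def by (subst card_UN_disjoint) (auto simp: \<open>finite A\<close>)
  also have "\<dots> \<le> card (Pow {..<L})"
    by (intro card_mono) auto
  finally show ?thesis
    by (simp add: card_Pow)
qed

lemma sum_residue_count_le_middle_binomial_sum_degenerate:
  assumes "A \<subseteq> {0..<q}" "card A = 0 \<or> L < card A"
  shows "(\<Sum>t\<in>A. residue_count q a L t) \<le> middle_binomial_sum L (card A)"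
  using assms sum_residue_count_le[OF assms(1)] middle_binomial_sum_eq_pow[of L "card A"]
    finite_subset[OF assms(1)] by auto

lemma sum_residue_count_Suc_le_split:
  assumes "coprime (a L) q" "A \<subseteq> {0..<q}" "A \<noteq> {}" "int (card A) < q"
  obtains C D where "C \<subseteq> {0..<q}" "D \<subseteq> {0..<q}" "card C = card A - 1" "card D = card A + 1"
    "(\<Sum>t\<in>A. residue_count q a (Suc L) t) \<le> (\<Sum>t\<in>C. residue_count q a L t) + (\<Sum>t\<in>D. residue_count q a L t)"
proof -
  let ?N = "residue_count q a L"
  define B where "B = (\<lambda>t. (t - a L) mod q) ` A"
  have "finite A" "0 < q"
    using assms(2,3) finite_subset by auto
  have B: "finite B" "card B = card A" "B \<subseteq> {0..<q}"
    using \<open>finite A\<close> \<open>0 < q\<close> card_image[OF inj_on_subset[OF inj_on_shift_mod assms(2)]]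
    unfolding B_def by auto
  have "card (A \<inter> B) < card A"
    unfolding B_def using assms by (rule card_inter_shift_residues_less)
  moreover have "card (A \<inter> B) + card (A \<union> B) = 2 * card A"
    using card_Un_Int[OF \<open>finite A\<close> B(1)] B(2) by simp
  ultimately obtain C D where CD: "C \<subseteq> A \<union> B" "D \<subseteq> A \<union> B" "card C = card A - 1" "card D = card A + 1"
      "sum ?N (A \<inter> B) + sum ?N (A \<union> B) \<le> sum ?N C + sum ?N D"
    using sum_nested_pair_rebalance[of "A \<union> B" "A \<inter> B" "card A - 1" ?N] \<open>finite A\<close> B(1)
    by fastforce
  have "(\<Sum>t\<in>A. residue_count q a (Suc L) t) = sum ?N A + sum ?N B"
    unfolding B_def by (rule sum_residue_count_Suc[OF assms(2)])
  also have "\<dots> = sum ?N (A \<inter> B) + sum ?N (A \<union> B)"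
    using sum.union_inter[OF \<open>finite A\<close> B(1), of ?N] by linarith
  also have "\<dots> \<le> sum ?N C + sum ?N D"
    by (fact CD(5))
  finally show ?thesis
    using that CD(1-4) assms(2) B(3) by blast
qed

(* The size condition forces |A| < q in every step with 0 < |A| <= L, and it is inherited by the
   sets of sizes |A| - 1 and |A| + 1 on the previous row. *)
lemma sum_residue_count_le_middle_binomial_sum:
  assumes "\<forall>i<L. coprime (a i) q" "A \<subseteq> {0..<q}" "int (card A + L) < 2 * q"
  shows "(\<Sum>t\<in>A. residue_count q a L t) \<le> middle_binomial_sum L (card A)"
  using assms
proof (induction L arbitrary: A)
  case 0
  then show ?case
    by (intro sum_residue_count_le_middle_binomial_sum_degenerate) auto
next
  case (Suc L)
  show ?case
  proof (cases "card A = 0 \<or> Suc L < card A")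
    case True
    with Suc.prems(2) show ?thesis
      by (rule sum_residue_count_le_middle_binomial_sum_degenerate)
  next
    case False
    then have "A \<noteq> {}" "int (card A) < q"
      using Suc.prems(3) by auto
    moreover have "coprime (a L) q"
      using Suc.prems(1) by simp
    ultimately obtain C D where CD: "C \<subseteq> {0..<q}" "D \<subseteq> {0..<q}" "card C = card A - 1" "card D = card A + 1"
      "(\<Sum>t\<in>A. residue_count q a (Suc L) t) \<le> (\<Sum>t\<in>C. residue_count q a L t) + (\<Sum>t\<in>D. residue_count q a L t)"
      using Suc.prems(2) by (metis sum_residue_count_Suc_le_split)
    have "int (card C + L) < 2 * q" "int (card D + L) < 2 * q"
      using CD(3,4) Suc.prems(3) False by linarith+
    then have "(\<Sum>t\<in>C. residue_count q a L t) + (\<Sum>t\<in>D. residue_count q a L t) \<le>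
        middle_binomial_sum L (card A - 1) + middle_binomial_sum L (card A + 1)"
      using Suc.IH[of C] Suc.IH[of D] Suc.prems(1) CD(1-4) by (intro add_mono) auto
    also have "\<dots> = middle_binomial_sum (Suc L) (card A)"
      using False by (simp add: middle_binomial_sum_Suc)
    finally show ?thesis
      using CD(5) by linarith
  qed
qed

lemma bij_betw_Pow_PiE_01:
  "bij_betw (\<lambda>S. restrict (\<lambda>i. if i \<in> S then 1 else 0) I) (Pow I) (I \<rightarrow>\<^sub>E {0::'a::zero_neq_one, 1})"
proof (rule bij_betw_byWitness[where f' = "\<lambda>e. {i \<in> I. e i = 1}"])
  show "\<forall>S\<in>Pow I. {i \<in> I. restrict (\<lambda>i. if i \<in> S then 1 else 0) I i = (1::'a)} = S"
    by auto
  show "\<forall>e\<in>I \<rightarrow>\<^sub>E {0::'a, 1}. restrict (\<lambda>i. if i \<in> {i \<in> I. e i = 1} then 1 else 0) I = e"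
    by (auto simp: PiE_def extensional_def fun_eq_iff)
qed (auto split: if_splits)

lemma zero_sum_count_eq_residue_count: "zero_sum_count q n a = residue_count (int q) a n 0"
proof -
  have sum_eq: "(\<Sum>i<n. restrict (\<lambda>i. if i \<in> S then 1 else 0) {..<n} i * a i) = (\<Sum>i\<in>S. a i)"
    if "S \<in> Pow {..<n}" for S
  proof -
    have "(\<Sum>i<n. restrict (\<lambda>i. if i \<in> S then 1 else 0) {..<n} i * a i) = (\<Sum>i<n. if i \<in> S then a i else 0)"
      by (rule sum.cong) auto
    also have "\<dots> = (\<Sum>i\<in>{..<n} \<inter> S. a i)"
      by (simp add: sum.inter_restrict)
    also have "{..<n} \<inter> S = S"
      using that by blast
    finally show ?thesis .
  qed
  have "bij_betw (\<lambda>S. restrict (\<lambda>i. if i \<in> S then 1 else 0) {..<n})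
      {S \<in> Pow {..<n}. [(\<Sum>i\<in>S. a i) = 0] (mod int q)}
      {eps \<in> {..<n} \<rightarrow>\<^sub>E {0::int, 1}. [(\<Sum>i<n. eps i * a i) = 0] (mod int q)}"
    by (rule bij_betw_Collect[OF bij_betw_Pow_PiE_01]) (simp only: sum_eq)
  then show ?thesis
    unfolding zero_sum_count_def residue_count_def atLeast0LessThan
    by (simp add: bij_betw_same_card)
qed

lemma card_balanced_subsets:
  assumes "finite P" "finite N" "P \<inter> N = {}"
  shows "card {S \<in> Pow (P \<union> N). card (S \<inter> P) = card (S \<inter> N)} = (card P + card N) choose card N"
proof -
  define \<phi> where "\<phi> S = (S \<inter> P) \<union> (N - S)" for S
  have "bij_betw \<phi> (Pow (P \<union> N)) (Pow (P \<union> N))"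
    by (rule bij_betw_byWitness[where f' = \<phi>]) (use assms(3) in \<open>auto simp: \<phi>_def\<close>)
  moreover have "card (\<phi> S) = card N \<longleftrightarrow> card (S \<inter> P) = card (S \<inter> N)" if "S \<in> Pow (P \<union> N)" for S
  proof -
    have "card (\<phi> S) = card (S \<inter> P) + card (N - S)"
      unfolding \<phi>_def using assms by (subst card_Un_disjoint) auto
    moreover have "card (N - S) + card (S \<inter> N) = card N"
      using assms(2) card_Int_Diff[of N S] by (simp add: Int_commute add.commute)
    ultimately show ?thesis
      by linarith
  qed
  ultimately have "bij_betw \<phi> {S \<in> Pow (P \<union> N). card (S \<inter> P) = card (S \<inter> N)} {T \<in> Pow (P \<union> N). card T = card N}"
    by (rule bij_betw_Collect)
  then have "card {S \<in> Pow (P \<union> N). card (S \<inter> P) = card (S \<inter> N)} = card {T. T \<subseteq> P \<union> N \<and> card T = card N}"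
    by (simp add: bij_betw_same_card)
  also have "\<dots> = (card P + card N) choose card N"
    using assms by (simp add: n_subsets card_Un_disjoint)
  finally show ?thesis .
qed

lemma zero_sum_count_plus_minus_ones:
  fixes q n :: nat
  assumes "n + 1 < 2 * q"
  shows "zero_sum_count q n (\<lambda>i. if i < (n + 1) div 2 then 1 else int q - 1) = n choose (n div 2)"
proof -
  define p where "p = (n + 1) div 2"
  define a where "a i = (if i < p then 1 else int q - 1)" for i
  define P where "P = {..<p}"
  define N where "N = {p..<n}"
  have PN: "{..<n} = P \<union> N" "P \<inter> N = {}" "card P = p" "card N = n div 2"
    unfolding P_def N_def p_def by auto
  have balanced_iff: "[(\<Sum>i\<in>S. a i) = 0] (mod int q) \<longleftrightarrow> card (S \<inter> P) = card (S \<inter> N)"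
    if "S \<subseteq> {..<n}" for S
  proof -
    define d where "d = int (card (S \<inter> P)) - int (card (S \<inter> N))"
    have "finite S" "S - P = S \<inter> N"
      using that finite_subset[OF that] unfolding P_def N_def by auto
    then have "(\<Sum>i\<in>S. a i) = (\<Sum>i\<in>S \<inter> P. 1) + (\<Sum>i\<in>S \<inter> N. (int q - 1))"
      using sum.Int_Diff[of S a P] by (simp add: a_def P_def N_def)
    also have "\<dots> = d + int q * int (card (S \<inter> N))"
      by (simp add: d_def algebra_simps)
    finally have "[(\<Sum>i\<in>S. a i) = 0] (mod int q) \<longleftrightarrow> int q dvd d"
      by (simp add: cong_0_iff dvd_add_left_iff)
    moreover have "card (S \<inter> P) \<le> p" "card (S \<inter> N) \<le> n div 2"
      using PN card_mono[of P "S \<inter> P"] card_mono[of N "S \<inter> N"] by (auto simp: P_def N_def)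
    then have "\<bar>d\<bar> < int q"
      using assms unfolding d_def p_def by linarith
    ultimately show ?thesis
      using dvd_imp_le_int[of d "int q"] unfolding d_def by force
  qed
  have "zero_sum_count q n a = card {S \<in> Pow {..<n}. [(\<Sum>i\<in>S. a i) = 0] (mod int q)}"
    by (simp add: zero_sum_count_eq_residue_count residue_count_def)
  also have "\<dots> = card {S \<in> Pow (P \<union> N). card (S \<inter> P) = card (S \<inter> N)}"
    using balanced_iff PN(1) by (intro arg_cong[where f = card]) auto
  also have "\<dots> = (card P + card N) choose card N"
    by (intro card_balanced_subsets) (auto simp: P_def N_def)
  also have "card P + card N = n"
    unfolding PN(3,4) p_def by presburger
  also note PN(4)
  finally show ?thesis
    by (simp add: a_def p_def)
qed

theorem corollary1:
  fixes q n :: nat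
  assumes "q > 0" and "n > 0" and "int q > \<lceil>real n / 2\<rceil>"
  shows "(\<forall>a :: nat \<Rightarrow> int.
            (\<forall>i<n. a i \<in> {0..<int q} \<and> coprime (a i) (int q)) \<longrightarrow>
            zero_sum_count q n a \<le> n choose (n div 2))
       \<and> (\<exists>a :: nat \<Rightarrow> int.
            (\<forall>i<n. a i \<in> {0..<int q} \<and> coprime (a i) (int q)) \<and>
            zero_sum_count q n a = n choose (n div 2))"
proof
  have "real n / 2 \<le> real q - 1"
    using assms(3) by (simp add: ceiling_less_iff)
  then have nq: "n + 1 < 2 * q"
    by linarith
  show "\<forall>a. (\<forall>i<n. a i \<in> {0..<int q} \<and> coprime (a i) (int q)) \<longrightarrow>
      zero_sum_count q n a \<le> n choose (n div 2)"
  proof (intro allI impI)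
    fix a :: "nat \<Rightarrow> int"
    assume "\<forall>i<n. a i \<in> {0..<int q} \<and> coprime (a i) (int q)"
    then have "(\<Sum>t\<in>{0}. residue_count (int q) a n t) \<le> middle_binomial_sum n (card {0::int})"
      using assms(1) nq by (intro sum_residue_count_le_middle_binomial_sum) auto
    also have "card {0::int} = 1"
      by simp
    also have "middle_binomial_sum n 1 = n choose (n div 2)"
      by (rule middle_binomial_sum_one)
    finally show "zero_sum_count q n a \<le> n choose (n div 2)"
      by (simp add: zero_sum_count_eq_residue_count)
  qed
  have "2 \<le> q"
    using nq assms(2) by linarith
  define a where "a = (\<lambda>i. if i < (n + 1) div 2 then 1 else int q - 1)"
  have "\<forall>i<n. a i \<in> {0..<int q} \<and> coprime (a i) (int q)"
    using \<open>2 \<le> q\<close> by (simp add: a_def)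
  moreover have "zero_sum_count q n a = n choose (n div 2)"
    unfolding a_def by (rule zero_sum_count_plus_minus_ones[OF nq])
  ultimately show "\<exists>a. (\<forall>i<n. a i \<in> {0..<int q} \<and> coprime (a i) (int q)) \<and>
      zero_sum_count q n a = n choose (n div 2)"
    by blast
qed

end
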